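(* For every integer $d\ge1$, $\lim_{n\to\infty}\bar\delta_{n,d}=\frac{d^d}{(d+1)^{d+1}}$.
   Context: For integers $\lambda\ge0$, $d\ge1$, write $\lambda=\sum_{i=1}^d\binom{k_i}{i}$ uniquely with $k_d>\cdots>k_1\ge0$ and set $\lambda^{[d]}=\sum_{i=1}^d\binom{k_i}{i+1}$. For $n>d$ and $0\le\lambda\le\binom nd$ let $\delta_{n,d}(\lambda)=\lambda/\binom nd-\lambda^{[d]}/\binom n{d+1}$, and $\bar\delta_{n,d}=\max_{0\le\lambda\le\binom nd}\delta_{n,d}(\lambda)$ (denoted $\delta_{n,d}$ in the paper's section on limits). *)

theory Defs
  imports "HOL-Analysis.Analysis"
begin

definition cascade_rep :: "nat \<Rightarrow> nat \<Rightarrow> (nat \<Rightarrow> nat) \<Rightarrow> bool" where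
  "cascade_rep d lam k \<longleftrightarrow>
     (\<forall>i\<in>{1..<d}. k i < k (Suc i)) \<and> lam = (\<Sum>i=1..d. k i choose i)"

definition cascade_up :: "nat \<Rightarrow> nat \<Rightarrow> nat" where
  "cascade_up d lam =
     (THE m. \<exists>k. cascade_rep d lam k \<and> m = (\<Sum>i=1..d. k i choose (Suc i)))"

definition delta :: "nat \<Rightarrow> nat \<Rightarrow> nat \<Rightarrow> real" where
  "delta n d lam = real lam / real (n choose d) - real (cascade_up d lam) / real (n choose (Suc d))"

definition delta_bar :: "nat \<Rightarrow> nat \<Rightarrow> real" where
  "delta_bar n d = Max ((\<lambda>lam. delta n d lam) ` {0..n choose d})"

end

theory Submission
  imports Defs "HOL-Real_Asymp.Real_Asymp"
begin

text \<open>The value \<open>delta n d lam\<close> is governed by the top entry \<open>M = k d\<close> of the cascade of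
  \<open>lam\<close>: since \<open>lam < (M + 1 choose d)\<close> and \<open>cascade_up d lam \<ge> (M choose d + 1)\<close>, it is at most
  \<open>delta n d (M choose d) + d / (n - d + 1)\<close>. Uniformly in \<open>M \<le> n\<close> one has
  \<open>(M choose j) / (n choose j) = (M / n) ^ j + O(1 / n)\<close>, so \<open>delta n d (M choose d)\<close> is
  \<open>h (M / n) + O(1 / n)\<close> with \<open>h t = t ^ d - t ^ (d + 1)\<close>. By weighted AM-GM, \<open>h\<close> attains its
  maximum \<open>d ^ d / (d + 1) ^ (d + 1)\<close> on \<open>[0, \<infinity>)\<close> at \<open>t = d / (d + 1)\<close>, which is approached
  by \<open>M / n\<close> for \<open>M = d n div (d + 1)\<close>.\<close>

lemma sum_binomial_cascade_less:
  assumes "\<forall>i\<in>{1..<j}. k i < k (Suc i)"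
  shows "(\<Sum>i=1..j. k i choose i) < Suc (k j) choose j"
  using assms
proof (induction j)
  case 0
  then show ?case by simp
next
  case (Suc j)
  have "(\<Sum>i=1..j. k i choose i) < Suc (k j) choose j"
    using Suc by auto
  moreover have "Suc (k j) choose j \<le> k (Suc j) choose j"
  proof (cases "j = 0")
    case False
    then have "k j < k (Suc j)" using Suc.prems by auto
    then show ?thesis by (intro binomial_right_mono) simp
  qed simp
  ultimately show ?case by simp
qed

lemma cascade_rep_top_bounds:
  assumes "cascade_rep d lam k" "1 \<le> d"
  shows "k d choose d \<le> lam" and "lam < Suc (k d) choose d"
  using assms sum_binomial_cascade_less[of d k]
  by (auto simp: cascade_rep_def intro: member_le_sum)

lemma cascade_rep_lower:
  assumes "cascade_rep d lam k" "i \<in> {1..d}"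
  shows "i - 1 \<le> k i"
  using assms(2)
proof (induction i)
  case (Suc i)
  show ?case
  proof (cases "i = 0")
    case False
    then have "k i < k (Suc i)" using assms(1) Suc.prems by (auto simp: cascade_rep_def)
    then show ?thesis using Suc False by simp
  qed simp
qed simp

lemma cascade_rep_remove_top:
  assumes "cascade_rep (Suc d) lam k"
  shows "cascade_rep d (lam - (k (Suc d) choose Suc d)) k"
  using assms by (auto simp: cascade_rep_def)

lemma cascade_rep_top_unique:
  assumes "cascade_rep d lam k" "cascade_rep d lam k'" "1 \<le> d"
  shows "k d = k' d"
proof (rule ccontr)
  have "\<not> k d < k' d" if "cascade_rep d lam k" "cascade_rep d lam k'" for k k'
  proof
    assume "k d < k' d"
    then have "Suc (k d) choose d \<le> k' d choose d" by (intro binomial_right_mono) simp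
    then show False using cascade_rep_top_bounds[OF that(1) \<open>1 \<le> d\<close>]
        cascade_rep_top_bounds[OF that(2) \<open>1 \<le> d\<close>] by linarith
  qed
  then show "k d \<noteq> k' d \<Longrightarrow> False" using assms(1,2) by (meson linorder_neqE_nat)
qed

lemma cascade_rep_unique:
  assumes "cascade_rep d lam k" "cascade_rep d lam k'" "i \<in> {1..d}"
  shows "k i = k' i"
  using assms
proof (induction d arbitrary: lam)
  case (Suc d)
  have top: "k (Suc d) = k' (Suc d)"
    using cascade_rep_top_unique[OF Suc.prems(1,2)] by simp
  show ?case
  proof (cases "i = Suc d")
    case False
    then show ?thesis
      using Suc.IH[OF cascade_rep_remove_top[OF Suc.prems(1)]] cascade_rep_remove_top[OF Suc.prems(2)]
        Suc.prems(3) top by simp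
  qed (use top in simp)
qed simp

lemma ex_binomial_bracket:
  fixes lam :: nat
  assumes "0 < j"
  shows "\<exists>m. m choose j \<le> lam \<and> lam < Suc m choose j"
proof (induction lam)
  case 0
  show ?case using assms by (intro exI[of _ "j - 1"]) simp
next
  case (Suc lam)
  then obtain m where m: "m choose j \<le> lam" "lam < Suc m choose j" by blast
  show ?case
  proof (cases "Suc lam < Suc m choose j")
    case True
    then show ?thesis using m by (intro exI[of _ m]) simp
  next
    case False
    then have eq: "Suc m choose j = Suc lam" using m(2) by simp
    then have "j \<le> Suc m" using binomial_eq_0_iff[of "Suc m" j] by simp
    then have "0 < Suc m choose (j - 1)" by simp
    then have "Suc lam < Suc (Suc m) choose j"
      using eq assms by (cases j) simp_all
    then show ?thesis using eq by (intro exI[of _ "Suc m"]) simp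
  qed
qed

lemma cascade_rep_exists:
  assumes "1 \<le> d"
  shows "\<exists>k. cascade_rep d lam k"
  using assms
proof (induction d arbitrary: lam rule: dec_induct)
  case base
  show ?case by (intro exI[of _ "\<lambda>_. lam"]) (simp add: cascade_rep_def)
next
  case (step d)
  obtain m where m: "m choose Suc d \<le> lam" "lam < Suc m choose Suc d"
    using ex_binomial_bracket[of "Suc d" lam] by blast
  obtain k where k: "cascade_rep d (lam - (m choose Suc d)) k"
    using step.IH by blast
  have "k d choose d < m choose d"
    using cascade_rep_top_bounds(1)[OF k step.hyps(1)] m by simp
  then have "k d < m" by (meson binomial_right_mono not_le leD)
  then have "cascade_rep (Suc d) lam (k(Suc d := m))"
    using k m(1) by (auto simp: cascade_rep_def less_Suc_eq)
  then show ?case by blast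
qed

lemma cascade_up_eq:
  assumes "cascade_rep d lam k"
  shows "cascade_up d lam = (\<Sum>i=1..d. k i choose Suc i)"
  unfolding cascade_up_def
proof (rule the_equality)
  fix u assume "\<exists>k'. cascade_rep d lam k' \<and> u = (\<Sum>i=1..d. k' i choose Suc i)"
  then show "u = (\<Sum>i=1..d. k i choose Suc i)"
    using cascade_rep_unique[OF assms] by (metis (no_types, lifting) sum.cong)
qed (use assms in blast)

lemma cascade_up_binomial:
  assumes "1 \<le> d" "d \<le> Suc m"
  shows "cascade_up d (m choose d) = m choose Suc d"
proof -
  define k where "k i = (if i = d then m else i - 1)" for i
  have sum_eq: "(\<Sum>i=1..d. k i choose (i + j)) = m choose (d + j)" for j
  proof -
    have "(\<Sum>i=1..d. k i choose (i + j)) = (\<Sum>i=1..d. if i = d then m choose (i + j) else 0)"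
      by (rule sum.cong) (auto simp: k_def binomial_eq_0)
    then show ?thesis using assms(1) by simp
  qed
  have sums: "(\<Sum>i=1..d. k i choose i) = m choose d"
      "(\<Sum>i=1..d. k i choose Suc i) = m choose Suc d"
    using sum_eq[of 0] sum_eq[of 1] by simp_all
  have "cascade_rep d (m choose d) k"
    using assms sums(1) by (auto simp: cascade_rep_def k_def)
  then show ?thesis using cascade_up_eq sums(2) by simp
qed

lemma cascade_rep_top_le:
  assumes "cascade_rep d lam k" "1 \<le> d" "d \<le> n" "lam \<le> n choose d"
  shows "k d \<le> n"
proof (rule ccontr)
  assume "\<not> k d \<le> n"
  then have "Suc n choose d \<le> k d choose d" by (intro binomial_right_mono) simp
  moreover have "Suc n choose d = (n choose (d - 1)) + (n choose d)" "0 < n choose (d - 1)"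
    using assms(2,3) by (cases d; simp)+
  ultimately show False using cascade_rep_top_bounds(1)[OF assms(1,2)] assms(4) by linarith
qed

lemma delta_le_delta_top:
  assumes "cascade_rep d lam k" "1 \<le> d" "k d \<le> n"
  shows "delta n d lam \<le> delta n d (k d choose d) + real (n choose (d - 1)) / real (n choose d)"
proof -
  define M where "M = k d"
  have "lam < (M choose (d - 1)) + (M choose d)"
    using cascade_rep_top_bounds(2)[OF assms(1,2)] assms(2) by (cases d) (simp_all add: M_def)
  moreover have "M choose (d - 1) \<le> n choose (d - 1)"
    using assms(3) by (simp add: M_def binomial_right_mono)
  ultimately have lam: "real lam \<le> real (M choose d) + real (n choose (d - 1))"
    by linarith
  have "d \<le> Suc M" using cascade_rep_lower[OF assms(1), of d] assms(2) by (simp add: M_def)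
  then have up: "cascade_up d (M choose d) \<le> cascade_up d lam"
    unfolding cascade_up_binomial[OF assms(2) \<open>d \<le> Suc M\<close>] cascade_up_eq[OF assms(1)]
    using assms(2) by (auto simp: M_def intro: member_le_sum)
  have "real lam / real (n choose d) \<le> (real (M choose d) + real (n choose (d - 1))) / real (n choose d)"
    using lam by (simp add: divide_right_mono)
  moreover have "real (cascade_up d (M choose d)) / real (n choose Suc d)
      \<le> real (cascade_up d lam) / real (n choose Suc d)"
    using up by (simp add: divide_right_mono)
  ultimately show ?thesis
    unfolding delta_def M_def[symmetric] add_divide_distrib by linarith
qed

lemma binomial_pred_ratio:
  assumes "1 \<le> d" "d \<le> n"
  shows "real (n choose (d - 1)) / real (n choose d) = real d / (real n - real d + 1)"
proof -
  have "(n - (d - 1)) * (n choose (d - 1)) = d * (n choose d)"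
    using binomial_absorb_comp[of n "d - 1"] binomial_absorption[of "d - 1" n] assms(1) by simp
  moreover have "real (n - (d - 1)) = real n - real d + 1" using assms by (simp add: of_nat_diff)
  ultimately have "(real n - real d + 1) * real (n choose (d - 1)) = real d * real (n choose d)"
    by (metis of_nat_mult)
  moreover have "0 < real (n choose d)" "0 < real n - real d + 1" using assms by simp_all
  ultimately show ?thesis by (simp add: field_simps)
qed

lemma binomial_ratio_eq_prod:
  "real (m choose k) / real (n choose k) = (\<Prod>i<k. (real m - real i) / (real n - real i))"
  by (simp add: binomial_gbinomial gbinomial_prod_rev atLeast0LessThan prod_dividef)

lemma binomial_ratio_power_approx:
  assumes "m \<le> n" "2 * k \<le> n"
  shows "\<bar>real (m choose k) / real (n choose k) - (real m / real n) ^ k\<bar> \<le> 2 * real k ^ 2 / real n"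
proof (cases "k = 0")
  case False
  then have n: "0 < real n" using assms by simp
  have factor_le_1: "\<bar>(real m - real i) / (real n - real i)\<bar> \<le> 1" if "i < k" for i
    using that assms by (simp add: abs_le_iff divide_le_eq_1 abs_divide)
  have factor_approx: "\<bar>(real m - real i) / (real n - real i) - real m / real n\<bar> \<le> 2 * real k / real n"
    if "i < k" for i
  proof -
    have ni: "real n \<le> 2 * (real n - real i)" using that assms by simp
    have "(real m - real i) / (real n - real i) - real m / real n
        = real i * (real m - real n) / (real n * (real n - real i))"
      using n ni by (simp add: field_simps)
    then have "\<bar>(real m - real i) / (real n - real i) - real m / real n\<bar>
        = real i * (real n - real m) / (real n * (real n - real i))"
      using n ni assms(1) by (simp add: abs_divide abs_mult)
    also have "\<dots> \<le> real k * real n / (real n * (real n / 2))"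
      using that n ni assms(1) by (intro frac_le mult_mono) auto
    also have "\<dots> = 2 * real k / real n" using n by simp
    finally show ?thesis .
  qed
  have "\<bar>real (m choose k) / real (n choose k) - (real m / real n) ^ k\<bar>
      = \<bar>(\<Prod>i<k. (real m - real i) / (real n - real i)) - (\<Prod>i<k. real m / real n)\<bar>"
    by (simp add: binomial_ratio_eq_prod)
  also have "\<dots> \<le> (\<Sum>i<k. \<bar>(real m - real i) / (real n - real i) - real m / real n\<bar>)"
    \<comment> \<open>all factors lie in \<open>[-1, 1]\<close>; this is where \<open>2 * k \<le> n\<close> is needed\<close>
  proof -
    have "\<bar>real m / real n\<bar> \<le> 1" using assms(1) n by simp
    then show ?thesis
      using norm_prod_diff[of "{..<k}" "\<lambda>i. (real m - real i) / (real n - real i)" "\<lambda>_. real m / real n"]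
        factor_le_1 by (simp del: prod_constant)
  qed
  also have "\<dots> \<le> real k * (2 * real k / real n)"
    using sum_bounded_above[of "{..<k}", OF factor_approx] by simp
  finally show ?thesis by (simp add: power2_eq_square mult.left_commute)
qed simp

lemma delta_binomial_approx:
  assumes "1 \<le> d" "d \<le> Suc m" "m \<le> n" "2 * (d + 1) \<le> n"
  shows "\<bar>delta n d (m choose d) - ((real m / real n) ^ d - (real m / real n) ^ (d + 1))\<bar>
    \<le> 4 * real (d + 1) ^ 2 / real n"
proof -
  define x where "x = real m / real n"
  define e where "e = 2 * real (d + 1) ^ 2 / real n"
  have "\<bar>real (m choose d) / real (n choose d) - x ^ d\<bar> \<le> 2 * real d ^ 2 / real n"
    using assms unfolding x_def by (intro binomial_ratio_power_approx) auto
  also have "\<dots> \<le> e"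
    unfolding e_def by (intro divide_right_mono mult_left_mono power_mono) auto
  finally have approx_d: "\<bar>real (m choose d) / real (n choose d) - x ^ d\<bar> \<le> e" .
  have approx_Suc_d: "\<bar>real (m choose (d + 1)) / real (n choose (d + 1)) - x ^ (d + 1)\<bar> \<le> e"
    using assms unfolding x_def e_def by (intro binomial_ratio_power_approx) auto
  have split: "delta n d (m choose d) - (x ^ d - x ^ (d + 1))
      = (real (m choose d) / real (n choose d) - x ^ d)
        - (real (m choose (d + 1)) / real (n choose (d + 1)) - x ^ (d + 1))"
    unfolding delta_def cascade_up_binomial[OF assms(1,2)] by simp
  have "\<bar>delta n d (m choose d) - (x ^ d - x ^ (d + 1))\<bar>
      \<le> \<bar>real (m choose d) / real (n choose d) - x ^ d\<bar>
        + \<bar>real (m choose (d + 1)) / real (n choose (d + 1)) - x ^ (d + 1)\<bar>"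
    unfolding split by (rule abs_triangle_ineq4)
  also have "\<dots> \<le> 4 * real (d + 1) ^ 2 / real n"
    using approx_d approx_Suc_d unfolding e_def by simp
  finally show ?thesis unfolding x_def .
qed

lemma weighted_am_gm_power:
  fixes s :: real
  assumes "0 \<le> s"
  shows "real (k + 1) * s ^ k \<le> real k * s ^ (k + 1) + 1"
proof (induction k)
  case (Suc k)
  have "0 \<le> (s - 1) * (s ^ (k + 1) - 1)"
  proof (cases "s \<le> 1")
    case True
    then have "s ^ (k + 1) \<le> 1" using assms by (intro power_le_one)
    then show ?thesis using True by (intro mult_nonpos_nonpos) auto
  next
    case False
    then have "1 \<le> s ^ (k + 1)" by (intro one_le_power) simp
    then show ?thesis using False by simp
  qed
  moreover have "0 \<le> s * (real k * s ^ (k + 1) + 1 - real (k + 1) * s ^ k)"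
    using Suc assms by simp
  moreover have "real (Suc k) * s ^ (Suc k + 1) + 1 - real (Suc k + 1) * s ^ Suc k
      = s * (real k * s ^ (k + 1) + 1 - real (k + 1) * s ^ k) + (s - 1) * (s ^ (k + 1) - 1)"
    by (simp add: algebra_simps)
  ultimately show ?case by linarith
qed simp

lemma power_diff_power_Suc_le:
  fixes t :: real
  assumes "0 \<le> t"
  shows "t ^ d - t ^ (d + 1) \<le> real d ^ d / real (d + 1) ^ (d + 1)"
proof (cases "d = 0")
  case False
  define s where "s = real (d + 1) * t / real d"
  have s: "0 \<le> s" "real (d + 1) * t = real d * s"
    using assms False by (simp_all add: s_def)
  have "(t ^ d - t ^ (d + 1)) * real (d + 1) ^ (d + 1)
      = (real (d + 1) * t) ^ d * real (d + 1) - (real (d + 1) * t) ^ (d + 1)"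
    unfolding power_mult_distrib by (simp add: algebra_simps)
  also have "\<dots> = real d ^ d * (real (d + 1) * s ^ d - real d * s ^ (d + 1))"
    unfolding s(2) power_mult_distrib by (simp add: algebra_simps)
  also have "\<dots> \<le> real d ^ d"
    using weighted_am_gm_power[OF s(1), of d] by (simp add: mult_left_le)
  finally show ?thesis by (simp add: pos_le_divide_eq del: of_nat_add)
qed (use assms in simp)

lemma power_diff_power_Suc_at_max:
  "(real d / real (d + 1)) ^ d - (real d / real (d + 1)) ^ (d + 1) = real d ^ d / real (d + 1) ^ (d + 1)"
proof -
  have "(real d / real (d + 1)) ^ d - (real d / real (d + 1)) ^ (d + 1)
      = (real d / real (d + 1)) ^ d * (1 - real d / real (d + 1))"
    by (simp add: algebra_simps)
  also have "1 - real d / real (d + 1) = 1 / real (d + 1)" by (simp add: field_simps)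
  finally show ?thesis by (simp add: power_divide)
qed

lemma delta_le_delta_bar:
  assumes "lam \<le> n choose d"
  shows "delta n d lam \<le> delta_bar n d"
  unfolding delta_bar_def using assms by (intro Max_ge) auto

lemma delta_bar_le:
  assumes "1 \<le> d" "2 * (d + 1) \<le> n"
  shows "delta_bar n d \<le> real d ^ d / real (d + 1) ^ (d + 1)
    + 4 * real (d + 1) ^ 2 / real n + real d / (real n - real d + 1)"
  unfolding delta_bar_def
proof (subst Max_le_iff, safe)
  fix lam assume "lam \<in> {0..n choose d}"
  obtain k where k: "cascade_rep d lam k" using cascade_rep_exists[OF assms(1)] by blast
  define x where "x = real (k d) / real n"
  have "k d \<le> n" using cascade_rep_top_le[OF k assms(1)] \<open>lam \<in> _\<close> assms(2) by simp
  moreover have "d \<le> Suc (k d)" using cascade_rep_lower[OF k, of d] assms(1) by simp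
  ultimately have "\<bar>delta n d (k d choose d) - (x ^ d - x ^ (d + 1))\<bar> \<le> 4 * real (d + 1) ^ 2 / real n"
    unfolding x_def using assms by (intro delta_binomial_approx) auto
  moreover have "x ^ d - x ^ (d + 1) \<le> real d ^ d / real (d + 1) ^ (d + 1)"
    unfolding x_def by (intro power_diff_power_Suc_le) simp
  moreover have "delta n d lam \<le> delta n d (k d choose d) + real d / (real n - real d + 1)"
    using delta_le_delta_top[OF k assms(1) \<open>k d \<le> n\<close>] binomial_pred_ratio[OF assms(1)] assms(2)
    by simp
  ultimately show "delta n d lam \<le> real d ^ d / real (d + 1) ^ (d + 1)
    + 4 * real (d + 1) ^ 2 / real n + real d / (real n - real d + 1)" by (simp add: abs_le_iff)
qed auto

lemma delta_bar_ge:
  assumes "1 \<le> d" "2 * (d + 1) \<le> n" and m: "m = d * n div (d + 1)"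
  shows "(real m / real n) ^ d - (real m / real n) ^ (d + 1) - 4 * real (d + 1) ^ 2 / real n
    \<le> delta_bar n d"
proof -
  have "d = d * (d + 1) div (d + 1)" by (rule nonzero_mult_div_cancel_right[symmetric]) simp
  also have "\<dots> \<le> m" unfolding m using assms(2) by (intro div_le_mono mult_le_mono2) simp
  finally have "d \<le> m" .
  have "m \<le> (d + 1) * n div (d + 1)" unfolding m by (intro div_le_mono mult_le_mono1) simp
  also have "\<dots> = n" by (rule nonzero_mult_div_cancel_left) simp
  finally have "m \<le> n" .
  have "m choose d \<le> n choose d" using \<open>m \<le> n\<close> by (rule binomial_right_mono)
  then show ?thesis
    using delta_binomial_approx[OF assms(1) _ \<open>m \<le> n\<close> assms(2)] \<open>d \<le> m\<close>
      delta_le_delta_bar[of "m choose d" n d]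
    by (simp add: abs_le_iff)
qed

lemma mult_div_over_tendsto:
  assumes "0 < b"
  shows "(\<lambda>n. real (a * n div b) / real n) \<longlonglongrightarrow> real a / real b"
proof (rule tendsto_sandwich)
  have bounds: "real a / real b - 1 / real n \<le> real (a * n div b) / real n
      \<and> real (a * n div b) / real n \<le> real a / real b" if "0 < n" for n
  proof -
    have "real (a * n) / real b = real (a * n div b) + real (a * n mod b) / real b"
      by (rule of_nat_of_nat_div_aux)
    moreover have "real (a * n mod b) / real b < 1" using assms by simp
    ultimately show ?thesis using that assms by (simp add: field_simps)
  qed
  show "\<forall>\<^sub>F n in sequentially. real a / real b - 1 / real n \<le> real (a * n div b) / real n"
    "\<forall>\<^sub>F n in sequentially. real (a * n div b) / real n \<le> real a / real b"
    using bounds by (auto intro: eventually_sequentiallyI[of 1])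
qed real_asymp+

lemma delta_bar_error_tendsto:
  "(\<lambda>n. 4 * real (d + 1) ^ 2 / real n + real d / (real n - real d + 1)) \<longlonglongrightarrow> 0"
  by real_asymp

theorem proposition6p3:
  fixes d :: nat
  assumes "d \<ge> 1"
  shows "(\<lambda>n. delta_bar n d) \<longlonglongrightarrow> real d ^ d / real (d + 1) ^ (d + 1)"
proof -
  define c where "c = real d ^ d / real (d + 1) ^ (d + 1)"
  define x where "x n = real (d * n div (d + 1)) / real n" for n
  define err where "err n = 4 * real (d + 1) ^ 2 / real n + real d / (real n - real d + 1)" for n
  have "x \<longlonglongrightarrow> real d / real (d + 1)"
    unfolding x_def by (rule mult_div_over_tendsto) simp
  then have lower: "(\<lambda>n. x n ^ d - x n ^ (d + 1) - 4 * real (d + 1) ^ 2 / real n) \<longlonglongrightarrow> c"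
    unfolding c_def power_diff_power_Suc_at_max[symmetric] by (auto intro!: tendsto_eq_intros)
  have upper: "(\<lambda>n. c + err n) \<longlonglongrightarrow> c"
    using tendsto_add[OF tendsto_const delta_bar_error_tendsto] unfolding err_def by simp
  have "\<forall>\<^sub>F n in sequentially. x n ^ d - x n ^ (d + 1) - 4 * real (d + 1) ^ 2 / real n \<le> delta_bar n d
      \<and> delta_bar n d \<le> c + err n"
    using eventually_ge_at_top[of "2 * (d + 1)"]
  proof eventually_elim
    case (elim n)
    show ?case
      using delta_bar_ge[OF assms elim refl] delta_bar_le[OF assms elim]
      unfolding x_def c_def err_def by simp
  qed
  then show ?thesis
    unfolding c_def[symmetric]
    by (intro tendsto_sandwich[OF _ _ lower upper]) (auto elim: eventually_mono)
qed

end
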